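(* Let $A$ be a metabelian Lie algebra over a field $k$ and let $a\in A$ be such that $a\circ c=0$ for every $c\in A^2$. Then $a\in\mathrm{Fit}(A)$.
   Context: A Lie algebra is metabelian if $(a\circ b)\circ(c\circ d)=0$ identically. $A^2$ is the ideal spanned by all products $a\circ b$; $\mathrm{Fit}(A)$ (Fitting radical) is the ideal generated by all elements lying in nilpotent ideals of $A$. *)

theory Defs
  imports Main "HOL.Vector_Spaces"
begin

text \<open>A Lie algebra over a field 'k: the carrier is the whole type 'v, which is a
  'k-vector space via scale; br is the Lie bracket (written a \<circ> b in the paper).\<close>

definition lie_algebra :: "('k::field \<Rightarrow> 'v::ab_group_add \<Rightarrow> 'v) \<Rightarrow> ('v \<Rightarrow> 'v \<Rightarrow> 'v) \<Rightarrow> bool" where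
  "lie_algebra scale br \<longleftrightarrow>
     vector_space scale \<and>
     (\<forall>x y z. br (x + y) z = br x z + br y z) \<and>
     (\<forall>x y z. br x (y + z) = br x y + br x z) \<and>
     (\<forall>c x y. br (scale c x) y = scale c (br x y)) \<and>
     (\<forall>c x y. br x (scale c y) = scale c (br x y)) \<and>
     (\<forall>x. br x x = 0) \<and>
     (\<forall>x y z. br x (br y z) + br y (br z x) + br z (br x y) = 0)"

definition metabelian :: "('v::ab_group_add \<Rightarrow> 'v \<Rightarrow> 'v) \<Rightarrow> bool" where
  "metabelian br \<longleftrightarrow> (\<forall>a b c d. br (br a b) (br c d) = 0)"

definition lie_prod :: "('k::field \<Rightarrow> 'v::ab_group_add \<Rightarrow> 'v) \<Rightarrow> ('v \<Rightarrow> 'v \<Rightarrow> 'v) \<Rightarrow> 'v set \<Rightarrow> 'v set \<Rightarrow> 'v set" where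
  "lie_prod scale br X Y = module.span scale {br x y | x y. x \<in> X \<and> y \<in> Y}"

definition lie_square :: "('k::field \<Rightarrow> 'v::ab_group_add \<Rightarrow> 'v) \<Rightarrow> ('v \<Rightarrow> 'v \<Rightarrow> 'v) \<Rightarrow> 'v set" where
  "lie_square scale br = lie_prod scale br UNIV UNIV"

definition lie_ideal :: "('k::field \<Rightarrow> 'v::ab_group_add \<Rightarrow> 'v) \<Rightarrow> ('v \<Rightarrow> 'v \<Rightarrow> 'v) \<Rightarrow> 'v set \<Rightarrow> bool" where
  "lie_ideal scale br I \<longleftrightarrow> module.subspace scale I \<and>
     (\<forall>x\<in>I. \<forall>y. br y x \<in> I \<and> br x y \<in> I)"

text \<open>Lower central series of a subset I (viewed as Lie algebra):
  I^1 = I, I^(n+1) = I \<circ> I^n (indexed from 0 here).\<close>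
primrec lower_central :: "('k::field \<Rightarrow> 'v::ab_group_add \<Rightarrow> 'v) \<Rightarrow> ('v \<Rightarrow> 'v \<Rightarrow> 'v) \<Rightarrow> 'v set \<Rightarrow> nat \<Rightarrow> 'v set" where
  "lower_central scale br I 0 = I"
| "lower_central scale br I (Suc n) = lie_prod scale br I (lower_central scale br I n)"

definition nilpotent_ideal :: "('k::field \<Rightarrow> 'v::ab_group_add \<Rightarrow> 'v) \<Rightarrow> ('v \<Rightarrow> 'v \<Rightarrow> 'v) \<Rightarrow> 'v set \<Rightarrow> bool" where
  "nilpotent_ideal scale br I \<longleftrightarrow> lie_ideal scale br I \<and> (\<exists>n. lower_central scale br I n = {0})"

definition fitting :: "('k::field \<Rightarrow> 'v::ab_group_add \<Rightarrow> 'v) \<Rightarrow> ('v \<Rightarrow> 'v \<Rightarrow> 'v) \<Rightarrow> 'v set" where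
  "fitting scale br = \<Inter>{J. lie_ideal scale br J \<and> \<Union>{I. nilpotent_ideal scale br I} \<subseteq> J}"

end

theory Submission
  imports Defs
begin

text \<open>The ideal \<open>I = k a + A\<^sup>2\<close> is abelian: \<open>A\<^sup>2\<close> is abelian because \<open>A\<close> is metabelian,
  \<open>a\<close> commutes with \<open>A\<^sup>2\<close> by hypothesis, and \<open>a \<circ> a = 0\<close>. Every subspace containing \<open>A\<^sup>2\<close> is
  an ideal, and an abelian ideal is nilpotent, so \<open>a \<in> I \<subseteq> Fit(A)\<close>.\<close>

locale lie_alg =
  fixes scale :: "'k::field \<Rightarrow> 'v::ab_group_add \<Rightarrow> 'v"
    and br :: "'v \<Rightarrow> 'v \<Rightarrow> 'v"
  assumes lie_algebra: "lie_algebra scale br"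
begin

sublocale vector_space scale
  using lie_algebra unfolding lie_algebra_def by blast

lemma br_add_left: "br (x + y) z = br x z + br y z"
  and br_add_right: "br x (y + z) = br x y + br x z"
  and br_scale_left: "br (scale c x) y = scale c (br x y)"
  and br_scale_right: "br x (scale c y) = scale c (br x y)"
  and br_self: "br x x = 0"
  using lie_algebra unfolding lie_algebra_def by blast+

lemma br_zero_left [simp]: "br 0 x = 0"
  using br_add_left[of 0 0 x] by simp

lemma br_zero_right [simp]: "br x 0 = 0"
  using br_add_right[of x 0 0] by simp

lemma br_anticomm: "br y x = - br x y"
proof -
  have "0 = br (x + y) (x + y)" by (rule br_self[symmetric])
  also have "\<dots> = br x x + br x y + (br y x + br y y)" by (simp add: br_add_left br_add_right)
  also have "\<dots> = br x y + br y x" by (simp add: br_self)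
  finally have "br x y + br y x = 0" by (rule sym)
  then show ?thesis by (simp add: add_eq_0_iff)
qed

lemma br_vanishes_on_span:
  assumes "\<And>x y. x \<in> S \<Longrightarrow> y \<in> S \<Longrightarrow> br x y = 0"
    and "x \<in> span S" and "y \<in> span S"
  shows "br x y = 0"
proof -
  have left_generator: "br s y = 0" if "s \<in> S" for s
    using \<open>y \<in> span S\<close>
  proof (rule span_induct)
    show "subspace {y. br s y = 0}"
      unfolding subspace_def by (simp add: br_add_right br_scale_right)
  qed (use assms(1) that in blast)
  show ?thesis
    using \<open>x \<in> span S\<close>
  proof (rule span_induct)
    show "subspace {x. br x y = 0}"
      unfolding subspace_def by (simp add: br_add_left br_scale_left)
  qed (rule left_generator)
qed

lemma lie_square_eq: "lie_square scale br = span {br x y | x y. True}"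
  unfolding lie_square_def lie_prod_def by simp

lemma br_in_lie_square: "br x y \<in> lie_square scale br"
  unfolding lie_square_eq by (rule span_base) blast

lemma lie_square_abelian:
  assumes "metabelian br" "c \<in> lie_square scale br" "d \<in> lie_square scale br"
  shows "br c d = 0"
proof (rule br_vanishes_on_span[of "{br x y | x y. True}"])
  show "br p q = 0" if "p \<in> {br x y | x y. True}" "q \<in> {br x y | x y. True}" for p q
    using that assms(1) unfolding metabelian_def by blast
qed (use assms(2,3) lie_square_eq in simp_all)

lemma lie_ideal_if_lie_square_subset:
  assumes "subspace J" "lie_square scale br \<subseteq> J"
  shows "lie_ideal scale br J"
  using assms br_in_lie_square unfolding lie_ideal_def by blast

lemma nilpotent_ideal_if_abelian:
  assumes "lie_ideal scale br I" "\<And>x y. x \<in> I \<Longrightarrow> y \<in> I \<Longrightarrow> br x y = 0"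
  shows "nilpotent_ideal scale br I"
proof -
  have "{br x y | x y. x \<in> I \<and> y \<in> I} \<subseteq> {0}"
    using assms(2) by blast
  then have "span {br x y | x y. x \<in> I \<and> y \<in> I} = {0}"
    using span_minimal[OF _ subspace_single_0] span_zero by blast
  then have "lower_central scale br I 1 = {0}"
    by (simp add: lie_prod_def)
  with assms(1) show ?thesis
    unfolding nilpotent_ideal_def by blast
qed

lemma nilpotent_ideal_subset_fitting:
  "nilpotent_ideal scale br I \<Longrightarrow> I \<subseteq> fitting scale br"
  unfolding fitting_def by blast

end

theorem lemma2p1p4:
  fixes scale :: "'k::field \<Rightarrow> 'v::ab_group_add \<Rightarrow> 'v"
    and br :: "'v \<Rightarrow> 'v \<Rightarrow> 'v"
    and a :: 'v
  assumes "lie_algebra scale br"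
    and "metabelian br"
    and "\<forall>c \<in> lie_square scale br. br a c = 0"
  shows "a \<in> fitting scale br"
proof -
  interpret lie_alg scale br by (rule lie_alg.intro) fact
  define I where "I = span (insert a (lie_square scale br))"
  have "lie_ideal scale br I"
    unfolding I_def by (rule lie_ideal_if_lie_square_subset) (auto intro: span_base)
  moreover have "br x y = 0" if "x \<in> I" "y \<in> I" for x y
  proof (rule br_vanishes_on_span[OF _ that[unfolded I_def]])
    fix c d assume "c \<in> insert a (lie_square scale br)" "d \<in> insert a (lie_square scale br)"
    then show "br c d = 0"
      using assms(3) lie_square_abelian[OF assms(2)] br_self br_anticomm[of a] by fastforce
  qed
  ultimately have "I \<subseteq> fitting scale br"
    by (intro nilpotent_ideal_subset_fitting nilpotent_ideal_if_abelian)
  moreover have "a \<in> I"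
    unfolding I_def by (simp add: span_base)
  ultimately show ?thesis by blast
qed

end
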